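(* Let $n\ge3$, $1\le k\le n/2$ and $0<a_1\le\dots\le a_{n+1}$ with $a_{n+1}\le a_1\big(\frac{n}{n-k}\big)^{1/6}$. Then the ellipsoid $\{x\in\mathbb{R}^{n+1}:\sum_{i=1}^{n+1}x_i^2/a_i^2=1\}$ satisfies $S\le a(n,k,H,0)$ at every point.
   Context: For a hypersurface in $\mathbb{R}^{n+1}$ with principal curvatures $\lambda_i$, $S=\sum\lambda_i^2$ and $H=\frac1n|\sum\lambda_i|$. For $1\le k\le n/2$, $a(n,k,t,0)=\frac{n^2t^2}{n-k}$. *)

theory Defs
  imports Complex_Main
begin

text \<open>Vectors of R^(n+1) are functions nat => real, coordinates indexed 0..n.\<close>

definition ip :: "nat \<Rightarrow> (nat \<Rightarrow> real) \<Rightarrow> (nat \<Rightarrow> real) \<Rightarrow> real" where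
  "ip n u v = (\<Sum>i\<le>n. u i * v i)"

definition on_ellipsoid :: "nat \<Rightarrow> (nat \<Rightarrow> real) \<Rightarrow> (nat \<Rightarrow> real) \<Rightarrow> bool" where
  "on_ellipsoid n a x \<longleftrightarrow> (\<Sum>i\<le>n. (x i)\<^sup>2 / (a i)\<^sup>2) = 1"

text \<open>Half the gradient of F(x) = sum x_i^2/a_i^2; normal direction of the ellipsoid.\<close>
definition ell_grad :: "(nat \<Rightarrow> real) \<Rightarrow> (nat \<Rightarrow> real) \<Rightarrow> nat \<Rightarrow> real" where
  "ell_grad a x = (\<lambda>i. x i / (a i)\<^sup>2)"

text \<open>Weingarten map (differential of the unit normal nu = g/|g|) applied to v:
  d nu (v) = (D v - <g, D v>/|g|^2 g) / |g|, with D v = (v_i / a_i^2).\<close>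
definition weingarten :: "nat \<Rightarrow> (nat \<Rightarrow> real) \<Rightarrow> (nat \<Rightarrow> real) \<Rightarrow> (nat \<Rightarrow> real) \<Rightarrow> nat \<Rightarrow> real" where
  "weingarten n a x v =
     (let g = ell_grad a x; Dv = (\<lambda>i. v i / (a i)\<^sup>2)
      in (\<lambda>i. (Dv i - ip n g Dv / ip n g g * g i) / sqrt (ip n g g)))"

definition principal_curvatures ::
  "nat \<Rightarrow> (nat \<Rightarrow> real) \<Rightarrow> (nat \<Rightarrow> real) \<Rightarrow> (nat \<Rightarrow> real) \<Rightarrow> bool" where
  "principal_curvatures n a x lam \<longleftrightarrow>
     (\<exists>e :: nat \<Rightarrow> nat \<Rightarrow> real.
        (\<forall>j<n. \<forall>l<n. ip n (e j) (e l) = (if j = l then 1 else 0)) \<and>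
        (\<forall>j<n. ip n (e j) (ell_grad a x) = 0) \<and>
        (\<forall>j<n. \<forall>i\<le>n. weingarten n a x (e j) i = lam j * e j i))"

definition S_curv :: "nat \<Rightarrow> (nat \<Rightarrow> real) \<Rightarrow> real" where
  "S_curv n lam = (\<Sum>j<n. (lam j)\<^sup>2)"

definition H_curv :: "nat \<Rightarrow> (nat \<Rightarrow> real) \<Rightarrow> real" where
  "H_curv n lam = \<bar>\<Sum>j<n. lam j\<bar> / real n"

definition a_fun0 :: "nat \<Rightarrow> nat \<Rightarrow> real \<Rightarrow> real" where
  "a_fun0 n k t = (real n)\<^sup>2 * t\<^sup>2 / (real n - real k)"

end

theory Submission
  imports Defs
begin

text \<open>
  At a point of the ellipsoid, the Rayleigh quotient of the Weingarten map on a unit tangent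
  vector v is \<open>\<Sum> v\<^sub>i\<^sup>2/a\<^sub>i\<^sup>2\<close> divided by the length of the gradient \<open>(x\<^sub>i/a\<^sub>i\<^sup>2)\<close>. Both are
  weighted means of the numbers \<open>1/a\<^sub>i\<^sup>2\<close> (the second one under a square root), so every
  principal curvature lies in \<open>[a\<^sub>0/a\<^sub>n\<^sup>2, a\<^sub>n/a\<^sub>0\<^sup>2]\<close>. The pinching hypothesis (already with
  exponent 1/3 instead of 1/6) makes \<open>(n - k) max \<lambda> \<le> n min \<lambda>\<close>, and for positive numbers that pinched
  \<open>(n - k) \<Sum> \<lambda>\<^sub>j\<^sup>2 \<le> max \<lambda> \<cdot> (n - k) \<Sum> \<lambda>\<^sub>j \<le> n min \<lambda> \<cdot> \<Sum> \<lambda>\<^sub>j \<le> (\<Sum> \<lambda>\<^sub>j)\<^sup>2\<close>,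
  which is \<open>S \<le> n\<^sup>2H\<^sup>2/(n - k)\<close>.
\<close>

lemma weighted_mean_bounds:
  fixes w f :: "'a \<Rightarrow> real"
  assumes "\<And>i. i \<in> I \<Longrightarrow> 0 \<le> w i" and "sum w I = 1"
    and "\<And>i. i \<in> I \<Longrightarrow> c \<le> f i \<and> f i \<le> C"
  shows "c \<le> (\<Sum>i\<in>I. w i * f i) \<and> (\<Sum>i\<in>I. w i * f i) \<le> C"
proof
  have "c = (\<Sum>i\<in>I. w i * c)" using assms(2) by (simp flip: sum_distrib_right)
  also have "\<dots> \<le> (\<Sum>i\<in>I. w i * f i)"
    using assms(1,3) by (intro sum_mono mult_left_mono) auto
  finally show "c \<le> (\<Sum>i\<in>I. w i * f i)" .
  have "(\<Sum>i\<in>I. w i * f i) \<le> (\<Sum>i\<in>I. w i * C)"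
    using assms(1,3) by (intro sum_mono mult_left_mono) auto
  also have "\<dots> = C" using assms(2) by (simp flip: sum_distrib_right)
  finally show "(\<Sum>i\<in>I. w i * f i) \<le> C" .
qed

lemma inverse_square_bounds:
  fixes b a A :: real
  assumes "0 < b" and "b \<le> a" and "a \<le> A"
  shows "1 / A\<^sup>2 \<le> 1 / a\<^sup>2 \<and> 1 / a\<^sup>2 \<le> 1 / b\<^sup>2"
  using assms by (auto intro!: divide_left_mono power_mono mult_pos_pos)

lemma weingarten_eigenvalue_eq:
  assumes "ip n v v = 1" and "ip n v (ell_grad a x) = 0"
    and "\<And>i. i \<le> n \<Longrightarrow> weingarten n a x v i = \<mu> * v i"
  shows "\<mu> = ip n v (\<lambda>i. v i / (a i)\<^sup>2) / sqrt (ip n (ell_grad a x) (ell_grad a x))"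
proof -
  define g where "g = ell_grad a x"
  define Dv where "Dv = (\<lambda>i. v i / (a i)\<^sup>2)"
  define c where "c = ip n g Dv / ip n g g"
  have "\<mu> = ip n (weingarten n a x v) v"
    using assms(1,3) by (simp add: ip_def mult.assoc flip: sum_distrib_left)
  also have "\<dots> = (\<Sum>i\<le>n. Dv i * v i - c * (g i * v i)) / sqrt (ip n g g)"
    unfolding weingarten_def ip_def Let_def g_def Dv_def c_def
    by (simp add: sum_divide_distrib algebra_simps)
  also have "\<dots> = (ip n v Dv - c * ip n v g) / sqrt (ip n g g)"
    by (simp add: ip_def sum_subtractf mult.commute flip: sum_distrib_left)
  finally show ?thesis using assms(2) by (simp add: g_def Dv_def)
qed

lemma ellipsoid_principal_curvature_bounds:
  assumes "0 < b" and "\<And>i. i \<le> n \<Longrightarrow> b \<le> a i \<and> a i \<le> A"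
    and "on_ellipsoid n a x" and "principal_curvatures n a x lam" and "j < n"
  shows "b / A\<^sup>2 \<le> lam j \<and> lam j \<le> A / b\<^sup>2"
proof -
  have A: "0 < A" using assms(1) assms(2)[of 0] by linarith
  have inv_sq: "\<And>i. i \<in> {..n} \<Longrightarrow> 1 / A\<^sup>2 \<le> 1 / (a i)\<^sup>2 \<and> 1 / (a i)\<^sup>2 \<le> 1 / b\<^sup>2"
    using assms(1,2) inverse_square_bounds by simp
  obtain e where
    orth: "\<forall>j<n. \<forall>l<n. ip n (e j) (e l) = (if j = l then 1 else 0)" and
    tang: "\<forall>j<n. ip n (e j) (ell_grad a x) = 0" and
    eig: "\<forall>j<n. \<forall>i\<le>n. weingarten n a x (e j) i = lam j * e j i"
    using assms(4) unfolding principal_curvatures_def by blast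
  define G where "G = ip n (ell_grad a x) (ell_grad a x)"
  define N where "N = ip n (e j) (\<lambda>i. e j i / (a i)\<^sup>2)"
  have "G = (\<Sum>i\<le>n. (x i)\<^sup>2 / (a i)\<^sup>2 * (1 / (a i)\<^sup>2))"
    by (simp add: G_def ip_def ell_grad_def power2_eq_square)
  then have G: "1 / A\<^sup>2 \<le> G \<and> G \<le> 1 / b\<^sup>2"
    using assms(3) inv_sq unfolding on_ellipsoid_def
    by (simp only:) (rule weighted_mean_bounds; simp)
  have "N = (\<Sum>i\<le>n. (e j i)\<^sup>2 * (1 / (a i)\<^sup>2))"
    by (simp add: N_def ip_def power2_eq_square)
  moreover have "(\<Sum>i\<le>n. (e j i)\<^sup>2) = 1"
    using orth assms(5) by (simp add: ip_def power2_eq_square)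
  ultimately have N: "1 / A\<^sup>2 \<le> N \<and> N \<le> 1 / b\<^sup>2"
    using inv_sq by (simp only:) (rule weighted_mean_bounds; simp)
  have "sqrt G \<le> sqrt ((1 / b)\<^sup>2)" and "sqrt ((1 / A)\<^sup>2) \<le> sqrt G"
    using G by (simp_all add: power_divide)
  then have sqrt_G: "1 / A \<le> sqrt G \<and> sqrt G \<le> 1 / b"
    using assms(1) A by simp
  have pos: "0 < N" "0 < sqrt G"
    using N sqrt_G A by (smt (verit) divide_pos_pos zero_less_power)+
  have lam: "lam j = N / sqrt G"
    using weingarten_eigenvalue_eq orth tang eig assms(5) unfolding N_def G_def by simp
  have "b / A\<^sup>2 = (1 / A\<^sup>2) / (1 / b)" by simp
  also have "\<dots> \<le> N / sqrt G"
    using N sqrt_G pos assms(1) by (intro frac_le) auto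
  finally have lower: "b / A\<^sup>2 \<le> lam j" using lam by simp
  have "N / sqrt G \<le> (1 / b\<^sup>2) / (1 / A)"
    using N sqrt_G pos A by (intro frac_le) auto
  then have upper: "lam j \<le> A / b\<^sup>2" using lam by simp
  show ?thesis using lower upper ..
qed

lemma pinched_sum_squares_le:
  fixes lam :: "nat \<Rightarrow> real" and m M :: real
  assumes "k < n" and "0 < m" and "\<And>j. j < n \<Longrightarrow> m \<le> lam j \<and> lam j \<le> M"
    and "(real n - real k) * M \<le> real n * m"
  shows "(real n - real k) * (\<Sum>j<n. (lam j)\<^sup>2) \<le> (\<Sum>j<n. lam j)\<^sup>2"
proof -
  let ?s = "\<Sum>j<n. lam j"
  have squares: "(\<Sum>j<n. (lam j)\<^sup>2) \<le> M * ?s"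
    unfolding sum_distrib_left
  proof (rule sum_mono)
    fix j assume "j \<in> {..<n}"
    then have "0 \<le> lam j" "lam j \<le> M" using assms(2) assms(3)[of j] by auto
    then show "(lam j)\<^sup>2 \<le> M * lam j" by (simp add: power2_eq_square mult_right_mono)
  qed
  have "(\<Sum>j<n. m) \<le> ?s" using assms(3) by (intro sum_mono) auto
  then have sum_ge: "real n * m \<le> ?s" by simp
  have s: "0 \<le> ?s" using sum_ge assms(2) by (smt (verit) of_nat_0_le_iff mult_nonneg_nonneg)
  have "(real n - real k) * (\<Sum>j<n. (lam j)\<^sup>2) \<le> (real n - real k) * M * ?s"
    using squares assms(1) by (simp add: mult.assoc mult_left_mono)
  also have "\<dots> \<le> real n * m * ?s" using assms(4) s by (rule mult_right_mono)
  also have "\<dots> \<le> ?s * ?s" using sum_ge s by (rule mult_right_mono)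
  finally show ?thesis by (simp add: power2_eq_square)
qed

lemma curvature_ratio_pinching:
  fixes b A q :: real
  assumes "0 < b" and "0 < A" and "A \<le> b * q powr (1/3)" and "0 < q"
  shows "A / b\<^sup>2 \<le> q * (b / A\<^sup>2)"
proof -
  have "A ^ 3 \<le> (b * q powr (1/3)) ^ 3" using assms(2,3) by (intro power_mono) auto
  also have "\<dots> = b ^ 3 * q"
    using assms(4) by (simp add: power_mult_distrib powr_realpow[symmetric] powr_powr)
  finally show ?thesis
    using assms(1,2) by (simp add: field_simps power2_eq_square power3_eq_cube)
qed

theorem mainTheorem8:
  fixes n k :: nat and a x lam :: "nat \<Rightarrow> real"
  assumes "n \<ge> 3" and "1 \<le> k" and "2 * k \<le> n"
    and "0 < a 0" and "\<forall>i<n. a i \<le> a (Suc i)"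
    and "a n \<le> a 0 * (real n / (real n - real k)) powr (1/6)"
    and "on_ellipsoid n a x"
    and "principal_curvatures n a x lam"
  shows "S_curv n lam \<le> a_fun0 n k (H_curv n lam)"
proof -
  have kn: "k < n" using assms(2,3) by simp
  define q where "q = real n / (real n - real k)"
  have q: "1 \<le> q" using kn by (simp add: q_def)
  have a_range: "a 0 \<le> a i \<and> a i \<le> a n" if "i \<le> n" for i
    using that assms(5) by (auto intro: lift_Suc_mono_le_ivl[where N = "{..<n}"])
  have "q powr (1/6) \<le> q powr (1/3)" using q by (intro powr_mono) auto
  then have "a n \<le> a 0 * q powr (1/3)"
    using assms(4,6) unfolding q_def[symmetric] by (smt (verit) mult_left_mono)
  then have ratio: "(real n - real k) * (a n / (a 0)\<^sup>2) \<le> real n * (a 0 / (a n)\<^sup>2)"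
    using curvature_ratio_pinching[of "a 0" "a n" q] a_range[of n] assms(4) q kn
    by (simp add: q_def field_simps)
  have "a 0 / (a n)\<^sup>2 \<le> lam j \<and> lam j \<le> a n / (a 0)\<^sup>2" if "j < n" for j
    using ellipsoid_principal_curvature_bounds[OF assms(4) a_range assms(7,8) that] .
  moreover have "0 < a 0 / (a n)\<^sup>2" using assms(4) a_range[of n] by simp
  ultimately have "(real n - real k) * S_curv n lam \<le> (\<Sum>j<n. lam j)\<^sup>2"
    unfolding S_curv_def using pinched_sum_squares_le[OF kn _ _ ratio] by blast
  then show ?thesis
    using kn by (simp add: a_fun0_def H_curv_def power_divide pos_le_divide_eq mult.commute)
qed

end
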